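(* Let $(\mu_z^\varepsilon)$ be a random walk on $\mathcal G$ of the form $\mu_z^\varepsilon=\delta_z+\varepsilon\mu_z$ for $\varepsilon\in[0,1]$, where each $\mu_z$ is a signed measure on $V$ of total mass zero with finite first moment. Then for every pair of distinct vertices $x,y$ the limit ${}^{\mathcal O}\mathrm{Ric}(x,y)=\lim_{\varepsilon\downarrow0}\varepsilon^{-1}\,{}^{\mathcal O}\mathrm{Ric}_\varepsilon(x,y)$ exists.
   Context: $\mathcal G$ is a locally finite graph with vertex set $V$, $\mathrm d$ a distance on $V$ with $(V,\mathrm d)$ complete. A random walk is a family of probability measures $\mu_z^\varepsilon$ on $V$ ($z\in V$, $\varepsilon\in[0,1]$) with finite first moments, continuous in $\varepsilon$, $\mu_z^0=\delta_z$ (so here $\delta_z+\varepsilon\mu_z$ is assumed to be a probability measure for each $\varepsilon\in[0,1]$). ${}^{\mathcal O}\mathrm{Ric}_\varepsilon(x,y):=1-\mathcal W_1(\mu_x^\varepsilon,\mu_y^\varepsilon)/\mathrm d(x,y)$, with $\mathcal W_1$ the $L^1$-Wasserstein distance w.r.t. $\mathrm d$. *)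

theory Defs
  imports "HOL-Analysis.Analysis"
begin

definition locally_finite_graph :: "'v set \<Rightarrow> ('v \<Rightarrow> 'v \<Rightarrow> bool) \<Rightarrow> bool" where
  "locally_finite_graph V E \<longleftrightarrow>
     (\<forall>x y. E x y \<longrightarrow> x \<in> V \<and> y \<in> V) \<and> (\<forall>x y. E x y \<longrightarrow> E y x) \<and>
     (\<forall>x\<in>V. finite {y \<in> V. E x y})"

definition is_distance :: "'v set \<Rightarrow> ('v \<Rightarrow> 'v \<Rightarrow> real) \<Rightarrow> bool" where
  "is_distance V d \<longleftrightarrow>
     (\<forall>x\<in>V. \<forall>y\<in>V. d x y \<ge> 0 \<and> (d x y = 0 \<longleftrightarrow> x = y) \<and> d x y = d y x) \<and>
     (\<forall>x\<in>V. \<forall>y\<in>V. \<forall>z\<in>V. d x z \<le> d x y + d y z)"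

definition complete_distance :: "'v set \<Rightarrow> ('v \<Rightarrow> 'v \<Rightarrow> real) \<Rightarrow> bool" where
  "complete_distance V d \<longleftrightarrow>
     (\<forall>s::nat \<Rightarrow> 'v. (\<forall>n. s n \<in> V) \<longrightarrow>
        (\<forall>e>0. \<exists>N. \<forall>m\<ge>N. \<forall>n\<ge>N. d (s m) (s n) < e) \<longrightarrow>
        (\<exists>l\<in>V. (\<lambda>n. d (s n) l) \<longlonglongrightarrow> 0))"

text \<open>Measures on V (discrete sigma-algebra) are represented by their weight functions
  \<open>'v \<Rightarrow> real\<close>, vanishing outside V.\<close>
definition coupling :: "'v set \<Rightarrow> ('v \<Rightarrow> real) \<Rightarrow> ('v \<Rightarrow> real) \<Rightarrow> ('v \<times> 'v \<Rightarrow> real) \<Rightarrow> bool" where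
  "coupling V p q \<pi> \<longleftrightarrow>
     (\<forall>a b. \<pi> (a, b) \<ge> 0) \<and> (\<forall>a b. a \<notin> V \<or> b \<notin> V \<longrightarrow> \<pi> (a, b) = 0) \<and>
     (\<forall>a\<in>V. ((\<lambda>b. \<pi> (a, b)) has_sum p a) V) \<and>
     (\<forall>b\<in>V. ((\<lambda>a. \<pi> (a, b)) has_sum q b) V)"

definition W1 :: "'v set \<Rightarrow> ('v \<Rightarrow> 'v \<Rightarrow> real) \<Rightarrow> ('v \<Rightarrow> real) \<Rightarrow> ('v \<Rightarrow> real) \<Rightarrow> real" where
  "W1 V d p q = (INF \<pi> \<in> {\<pi>. coupling V p q \<pi> \<and> (\<lambda>(a, b). d a b * \<pi> (a, b)) summable_on (V \<times> V)}.
                   infsum (\<lambda>(a, b). d a b * \<pi> (a, b)) (V \<times> V))"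

definition dirac :: "'v \<Rightarrow> 'v \<Rightarrow> real" where
  "dirac z v = (if v = z then 1 else 0)"

definition lazy_walk :: "('v \<Rightarrow> 'v \<Rightarrow> real) \<Rightarrow> real \<Rightarrow> 'v \<Rightarrow> 'v \<Rightarrow> real" where
  "lazy_walk \<mu> \<epsilon> z v = dirac z v + \<epsilon> * \<mu> z v"

definition ORic_eps :: "'v set \<Rightarrow> ('v \<Rightarrow> 'v \<Rightarrow> real) \<Rightarrow> ('v \<Rightarrow> 'v \<Rightarrow> real) \<Rightarrow> real \<Rightarrow> 'v \<Rightarrow> 'v \<Rightarrow> real" where
  "ORic_eps V d \<mu> \<epsilon> x y = 1 - W1 V d (lazy_walk \<mu> \<epsilon> x) (lazy_walk \<mu> \<epsilon> y) / d x y"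

end

theory Submission
  imports Defs
begin

text \<open>Write \<open>W(\<epsilon>)\<close> for the Wasserstein distance between \<open>\<mu>\<^sub>x\<^sup>\<epsilon>\<close> and \<open>\<mu>\<^sub>y\<^sup>\<epsilon>\<close>.
  Since \<open>\<mu>\<^sub>z\<^sup>t\<^sup>\<epsilon> = (1 - t) \<delta>\<^sub>z + t \<mu>\<^sub>z\<^sup>\<epsilon>\<close> and \<open>W\<^sub>1\<close> is convex, with
  \<open>W\<^sub>1(\<delta>\<^sub>x, \<delta>\<^sub>y) \<le> d(x,y)\<close>, we get \<open>W(t \<epsilon>) \<le> (1 - t) d(x,y) + t W(\<epsilon>)\<close>: the quotient
  \<open>Ric\<^sub>\<epsilon>(x,y) / \<epsilon>\<close> is nonincreasing in \<open>\<epsilon>\<close>. Testing any coupling against the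
  1-Lipschitz function \<open>d(\<cdot>, y)\<close> gives \<open>W(\<epsilon>) \<ge> d(x,y) - C \<epsilon>\<close>, so the quotient is
  bounded above, and therefore converges as \<open>\<epsilon> \<down> 0\<close>.\<close>

lemma ex_lim_quotient_at_right_0:
  fixes g :: "real \<Rightarrow> real"
  assumes superhom: "\<And>s e. 0 < s \<Longrightarrow> s < 1 \<Longrightarrow> 0 < e \<Longrightarrow> e \<le> 1 \<Longrightarrow> s * g e \<le> g (s * e)"
    and bound: "\<And>e. 0 < e \<Longrightarrow> e \<le> 1 \<Longrightarrow> g e \<le> C * e"
  shows "\<exists>L. ((\<lambda>e. g e / e) \<longlongrightarrow> L) (at_right 0)"
proof -
  define h where "h e = - (g e / e)" for e
  have h_mono: "h a \<le> h b" if "a \<in> {..1}" "b \<in> {..1}" "0 < a" "a \<le> b" for a b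
  proof (cases "a = b")
    case False
    then have "a / b * g b \<le> g (a / b * b)"
      using that by (intro superhom) auto
    then have "g b / b \<le> g a / a"
      using that by (simp add: field_simps)
    then show ?thesis by (simp add: h_def)
  qed simp
  have h_bound: "- C \<le> h a" if "a \<in> {..1}" "0 < a" for a
    using bound[of a] that by (simp add: h_def field_simps)
  have "at (0::real) within ({0<..} \<inter> {..1}) = at_right 0"
    by (rule at_within_nhd[of _ "{..<1}"]) auto
  then have "(h \<longlongrightarrow> Inf (h ` ({0<..} \<inter> {..1}))) (at_right 0)"
    using Lim_right_bound[of "{..1}" 0 h, OF h_mono h_bound] by simp
  then have "((\<lambda>e. g e / e) \<longlongrightarrow> - Inf (h ` ({0<..} \<inter> {..1}))) (at_right 0)"
    using tendsto_minus by (fastforce simp: h_def)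
  then show ?thesis by blast
qed

lemma
  assumes "is_distance V d" and "a \<in> V" and "b \<in> V"
  shows is_distance_nonneg: "0 \<le> d a b"
    and is_distance_sym: "d a b = d b a"
    and is_distance_eq_0_iff: "d a b = 0 \<longleftrightarrow> a = b"
  using assms unfolding is_distance_def by blast+

lemma is_distance_triangle:
  "is_distance V d \<Longrightarrow> a \<in> V \<Longrightarrow> b \<in> V \<Longrightarrow> c \<in> V \<Longrightarrow> d a c \<le> d a b + d b c"
  unfolding is_distance_def by blast

lemma is_distance_pos:
  "is_distance V d \<Longrightarrow> a \<in> V \<Longrightarrow> b \<in> V \<Longrightarrow> a \<noteq> b \<Longrightarrow> 0 < d a b"
  using is_distance_nonneg is_distance_eq_0_iff by fastforce

lemma has_sum_mult_dirac: "z \<in> A \<Longrightarrow> ((\<lambda>v. f v * dirac z v) has_sum f z) A"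
  by (rule has_sum_finite_neutralI[of "{z}"]) (auto simp: dirac_def)

lemma has_sum_dirac: "z \<in> A \<Longrightarrow> (dirac z has_sum 1) A"
  using has_sum_mult_dirac[of z A "\<lambda>_. 1"] by simp

definition transport_cost :: "'v set \<Rightarrow> ('v \<Rightarrow> 'v \<Rightarrow> real) \<Rightarrow> ('v \<times> 'v \<Rightarrow> real) \<Rightarrow> real" where
  "transport_cost V d \<pi> = infsum (\<lambda>(a, b). d a b * \<pi> (a, b)) (V \<times> V)"

definition finite_cost_couplings ::
    "'v set \<Rightarrow> ('v \<Rightarrow> 'v \<Rightarrow> real) \<Rightarrow> ('v \<Rightarrow> real) \<Rightarrow> ('v \<Rightarrow> real) \<Rightarrow> ('v \<times> 'v \<Rightarrow> real) set" where
  "finite_cost_couplings V d p q =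
     {\<pi>. coupling V p q \<pi> \<and> (\<lambda>(a, b). d a b * \<pi> (a, b)) summable_on (V \<times> V)}"

lemma W1_eq_Inf_transport_cost:
  "W1 V d p q = Inf (transport_cost V d ` finite_cost_couplings V d p q)"
  by (simp add: W1_def transport_cost_def finite_cost_couplings_def)

lemma has_sum_transport_cost:
  "\<pi> \<in> finite_cost_couplings V d p q \<Longrightarrow>
     ((\<lambda>(a, b). d a b * \<pi> (a, b)) has_sum transport_cost V d \<pi>) (V \<times> V)"
  unfolding finite_cost_couplings_def transport_cost_def by auto

lemma transport_cost_nonneg:
  assumes "is_distance V d" and "coupling V p q \<pi>"
  shows "0 \<le> transport_cost V d \<pi>"
  unfolding transport_cost_def using assms
  by (intro infsum_nonneg) (auto simp: coupling_def is_distance_nonneg)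

lemma W1_le_transport_cost:
  assumes "is_distance V d" and "\<pi> \<in> finite_cost_couplings V d p q"
  shows "W1 V d p q \<le> transport_cost V d \<pi>"
  unfolding W1_eq_Inf_transport_cost using assms transport_cost_nonneg
  by (intro cInf_lower bdd_belowI2[of _ 0]) (auto simp: finite_cost_couplings_def)

lemma coupling_swap: "coupling V p q \<pi> \<Longrightarrow> coupling V q p (\<lambda>(b, a). \<pi> (a, b))"
  unfolding coupling_def by auto

lemma has_sum_coupling_first_marginal:
  assumes \<pi>: "coupling V p q \<pi>"
    and f_nonneg: "\<And>a. a \<in> V \<Longrightarrow> 0 \<le> f a"
    and f_sum: "((\<lambda>a. f a * p a) has_sum S) V"
  shows "((\<lambda>(a, b). f a * \<pi> (a, b)) has_sum S) (V \<times> V)"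
proof -
  have rows: "((\<lambda>b. (\<lambda>(a, b). f a * \<pi> (a, b)) (a, b)) has_sum f a * p a) V" if "a \<in> V" for a
    using \<pi> that has_sum_cmult_right unfolding coupling_def by fastforce
  have "(\<lambda>(a, b). f a * \<pi> (a, b)) summable_on (V \<times> V)"
    by (rule summable_on_SigmaI[OF rows])
      (use \<pi> f_nonneg f_sum in \<open>auto simp: coupling_def has_sum_iff\<close>)
  then show ?thesis
    using has_sum_SigmaI[OF rows f_sum] by simp
qed

lemma has_sum_coupling_second_marginal:
  assumes \<pi>: "coupling V p q \<pi>"
    and f_nonneg: "\<And>b. b \<in> V \<Longrightarrow> 0 \<le> f b"
    and f_sum: "((\<lambda>b. f b * q b) has_sum S) V"
  shows "((\<lambda>(a, b). f b * \<pi> (a, b)) has_sum S) (V \<times> V)"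
  using has_sum_coupling_first_marginal[OF coupling_swap[OF \<pi>] f_nonneg f_sum]
  by (subst has_sum_swap) (simp add: case_prod_unfold)

text \<open>The easy half of Kantorovich duality; \<open>f \<ge> 0\<close> only serves to exchange the order of
  summation.\<close>

lemma transport_cost_ge_lipschitz_diff:
  assumes d: "is_distance V d" and \<pi>: "\<pi> \<in> finite_cost_couplings V d p q"
    and f_nonneg: "\<And>a. a \<in> V \<Longrightarrow> 0 \<le> f a"
    and f_lipschitz: "\<And>a b. a \<in> V \<Longrightarrow> b \<in> V \<Longrightarrow> f a - f b \<le> d a b"
    and p_sum: "((\<lambda>a. f a * p a) has_sum Sp) V"
    and q_sum: "((\<lambda>b. f b * q b) has_sum Sq) V"
  shows "Sp - Sq \<le> transport_cost V d \<pi>"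
proof -
  have coupling: "coupling V p q \<pi>"
    using \<pi> by (simp add: finite_cost_couplings_def)
  have "((\<lambda>(a, b). f a * \<pi> (a, b) - f b * \<pi> (a, b)) has_sum Sp - Sq) (V \<times> V)"
    using has_sum_add[OF has_sum_coupling_first_marginal[OF coupling f_nonneg p_sum]
        has_sum_uminusI[OF has_sum_coupling_second_marginal[OF coupling f_nonneg q_sum]]]
    by (simp add: case_prod_unfold)
  then show ?thesis
  proof (rule has_sum_mono[OF _ has_sum_transport_cost[OF \<pi>]], clarify)
    fix a b assume "a \<in> V" "b \<in> V"
    then have "(f a - f b) * \<pi> (a, b) \<le> d a b * \<pi> (a, b)"
      using coupling f_lipschitz by (intro mult_right_mono) (auto simp: coupling_def)
    then show "f a * \<pi> (a, b) - f b * \<pi> (a, b) \<le> d a b * \<pi> (a, b)"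
      by (simp add: left_diff_distrib)
  qed
qed

lemma W1_ge_lipschitz_diff:
  assumes d: "is_distance V d" and ne: "finite_cost_couplings V d p q \<noteq> {}"
    and f_nonneg: "\<And>a. a \<in> V \<Longrightarrow> 0 \<le> f a"
    and f_lipschitz: "\<And>a b. a \<in> V \<Longrightarrow> b \<in> V \<Longrightarrow> f a - f b \<le> d a b"
    and p_sum: "((\<lambda>a. f a * p a) has_sum Sp) V"
    and q_sum: "((\<lambda>b. f b * q b) has_sum Sq) V"
  shows "Sp - Sq \<le> W1 V d p q"
  unfolding W1_eq_Inf_transport_cost using ne
  by (auto intro!: cInf_greatest transport_cost_ge_lipschitz_diff[OF d _ f_nonneg f_lipschitz p_sum q_sum])

lemma coupling_convex_combination:
  assumes "coupling V p q \<pi>" and "coupling V p' q' \<pi>'" and "0 \<le> t" and "t \<le> 1"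
  shows "coupling V (\<lambda>a. (1 - t) * p a + t * p' a) (\<lambda>b. (1 - t) * q b + t * q' b)
           (\<lambda>ab. (1 - t) * \<pi> ab + t * \<pi>' ab)"
  using assms unfolding coupling_def
  by (auto intro!: has_sum_add has_sum_cmult_right)

lemma finite_cost_couplings_convex_combination:
  assumes "\<pi> \<in> finite_cost_couplings V d p q" and "\<pi>' \<in> finite_cost_couplings V d p' q'"
    and "0 \<le> t" and "t \<le> 1"
  shows "(\<lambda>ab. (1 - t) * \<pi> ab + t * \<pi>' ab)
           \<in> finite_cost_couplings V d (\<lambda>a. (1 - t) * p a + t * p' a) (\<lambda>b. (1 - t) * q b + t * q' b)"
    and "transport_cost V d (\<lambda>ab. (1 - t) * \<pi> ab + t * \<pi>' ab)
           = (1 - t) * transport_cost V d \<pi> + t * transport_cost V d \<pi>'"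
proof -
  have "((\<lambda>(a, b). d a b * ((1 - t) * \<pi> (a, b) + t * \<pi>' (a, b)))
          has_sum (1 - t) * transport_cost V d \<pi> + t * transport_cost V d \<pi>') (V \<times> V)"
    using has_sum_add[OF has_sum_cmult_right[OF has_sum_transport_cost[OF assms(1)], of "1 - t"]
        has_sum_cmult_right[OF has_sum_transport_cost[OF assms(2)], of t]]
    by (simp add: case_prod_unfold algebra_simps)
  with assms show "(\<lambda>ab. (1 - t) * \<pi> ab + t * \<pi>' ab)
           \<in> finite_cost_couplings V d (\<lambda>a. (1 - t) * p a + t * p' a) (\<lambda>b. (1 - t) * q b + t * q' b)"
      and "transport_cost V d (\<lambda>ab. (1 - t) * \<pi> ab + t * \<pi>' ab)
           = (1 - t) * transport_cost V d \<pi> + t * transport_cost V d \<pi>'"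
    by (auto simp: finite_cost_couplings_def transport_cost_def has_sum_iff
        intro: coupling_convex_combination)
qed

lemma le_convex_combination_Inf:
  fixes c t :: real
  assumes "A \<noteq> {}" "bdd_below A" "B \<noteq> {}" "bdd_below B" "0 \<le> t" "t \<le> 1"
    and le: "\<And>a b. a \<in> A \<Longrightarrow> b \<in> B \<Longrightarrow> c \<le> (1 - t) * a + t * b"
  shows "c \<le> (1 - t) * Inf A + t * Inf B"
proof (rule field_le_epsilon)
  fix e :: real assume "0 < e"
  then obtain a b where "a \<in> A" "a < Inf A + e" "b \<in> B" "b < Inf B + e"
    using assms(1-4) by (meson cInf_less_iff less_add_same_cancel1)
  moreover have "(1 - t) * a \<le> (1 - t) * (Inf A + e)" and "t * b \<le> t * (Inf B + e)"
    using calculation assms(5,6) by (auto intro!: mult_left_mono)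
  ultimately have "c \<le> (1 - t) * (Inf A + e) + t * (Inf B + e)"
    using le[of a b] by linarith
  then show "c \<le> (1 - t) * Inf A + t * Inf B + e"
    by (simp add: algebra_simps)
qed

lemma W1_convex:
  assumes d: "is_distance V d"
    and ne: "finite_cost_couplings V d p q \<noteq> {}" "finite_cost_couplings V d p' q' \<noteq> {}"
    and t: "0 \<le> t" "t \<le> 1"
  shows "W1 V d (\<lambda>a. (1 - t) * p a + t * p' a) (\<lambda>b. (1 - t) * q b + t * q' b)
           \<le> (1 - t) * W1 V d p q + t * W1 V d p' q'"
  unfolding W1_eq_Inf_transport_cost[of V d p q] W1_eq_Inf_transport_cost[of V d p' q']
proof (rule le_convex_combination_Inf)
  show "bdd_below (transport_cost V d ` finite_cost_couplings V d p q)"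
    and "bdd_below (transport_cost V d ` finite_cost_couplings V d p' q')"
    using d transport_cost_nonneg by (auto intro!: bdd_belowI2[of _ 0] simp: finite_cost_couplings_def)
  fix c c' assume "c \<in> transport_cost V d ` finite_cost_couplings V d p q"
    and "c' \<in> transport_cost V d ` finite_cost_couplings V d p' q'"
  then obtain \<pi> \<pi>' where \<pi>: "\<pi> \<in> finite_cost_couplings V d p q" "c = transport_cost V d \<pi>"
    and \<pi>': "\<pi>' \<in> finite_cost_couplings V d p' q'" "c' = transport_cost V d \<pi>'"
    by blast
  show "W1 V d (\<lambda>a. (1 - t) * p a + t * p' a) (\<lambda>b. (1 - t) * q b + t * q' b) \<le> (1 - t) * c + t * c'"
    using W1_le_transport_cost[OF d finite_cost_couplings_convex_combination(1)[OF \<pi>(1) \<pi>'(1) t]]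
    unfolding finite_cost_couplings_convex_combination(2)[OF \<pi>(1) \<pi>'(1) t] \<pi>(2) \<pi>'(2) .
qed (use ne t in auto)

lemma dirac_coupling:
  assumes "x \<in> V" "y \<in> V"
  shows "dirac (x, y) \<in> finite_cost_couplings V d (dirac x) (dirac y)"
    and "transport_cost V d (dirac (x, y)) = d x y"
proof -
  have cost: "((\<lambda>(a, b). d a b * dirac (x, y) (a, b)) has_sum d x y) (V \<times> V)"
    using has_sum_mult_dirac[of "(x, y)" "V \<times> V" "\<lambda>(a, b). d a b"] assms
    by (simp add: case_prod_unfold)
  have "coupling V (dirac x) (dirac y) (dirac (x, y))"
    using assms unfolding coupling_def
    by (auto simp: dirac_def intro!: has_sum_dirac[unfolded dirac_def])
  with cost show "dirac (x, y) \<in> finite_cost_couplings V d (dirac x) (dirac y)"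
      and "transport_cost V d (dirac (x, y)) = d x y"
    by (auto simp: finite_cost_couplings_def transport_cost_def has_sum_iff)
qed

lemma product_coupling_finite_cost:
  assumes d: "is_distance V d" and z: "z \<in> V"
    and p_nonneg: "\<And>a. a \<in> V \<Longrightarrow> 0 \<le> p a" and q_nonneg: "\<And>b. b \<in> V \<Longrightarrow> 0 \<le> q b"
    and p_sum: "(p has_sum 1) V" and q_sum: "(q has_sum 1) V"
    and p_moment: "(\<lambda>a. d a z * p a) summable_on V"
    and q_moment: "(\<lambda>b. d b z * q b) summable_on V"
  shows "(\<lambda>(a, b). if a \<in> V \<and> b \<in> V then p a * q b else 0) \<in> finite_cost_couplings V d p q"
proof -
  define \<pi> where "\<pi> = (\<lambda>(a, b). if a \<in> V \<and> b \<in> V then p a * q b else 0)"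
  have rows: "((\<lambda>b. \<pi> (a, b)) has_sum p a) V" if "a \<in> V" for a
    using has_sum_cmult_right[OF q_sum, of "p a", simplified] that
    by (simp add: \<pi>_def cong: has_sum_cong)
  have cols: "((\<lambda>a. \<pi> (a, b)) has_sum q b) V" if "b \<in> V" for b
    using has_sum_cmult_left[OF p_sum, of "q b", simplified] that
    by (simp add: \<pi>_def cong: has_sum_cong)
  have coupling: "coupling V p q \<pi>"
    using rows cols p_nonneg q_nonneg by (auto simp: coupling_def \<pi>_def)
  have dist_z_nonneg: "0 \<le> d a z" if "a \<in> V" for a
    using is_distance_nonneg[OF d that z] .
  have "((\<lambda>(a, b). d a z * \<pi> (a, b) + d b z * \<pi> (a, b))
          has_sum (\<Sum>\<^sub>\<infinity>a\<in>V. d a z * p a) + (\<Sum>\<^sub>\<infinity>b\<in>V. d b z * q b)) (V \<times> V)"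
    using has_sum_add[OF
        has_sum_coupling_first_marginal[OF coupling dist_z_nonneg has_sum_infsum[OF p_moment]]
        has_sum_coupling_second_marginal[OF coupling dist_z_nonneg has_sum_infsum[OF q_moment]]]
    by (simp add: case_prod_unfold)
  moreover have "0 \<le> d a b * \<pi> (a, b)" if "a \<in> V" "b \<in> V" for a b
    using coupling is_distance_nonneg[OF d that] by (simp add: coupling_def)
  moreover have "d a b * \<pi> (a, b) \<le> d a z * \<pi> (a, b) + d b z * \<pi> (a, b)"
    if "a \<in> V" "b \<in> V" for a b
  proof -
    have "d a b \<le> d a z + d b z"
      using is_distance_triangle[OF d that(1) z that(2)] is_distance_sym[OF d z that(2)] by simp
    with coupling show ?thesis
      by (metis coupling_def distrib_right mult_right_mono)
  qed
  ultimately have "(\<lambda>(a, b). d a b * \<pi> (a, b)) summable_on (V \<times> V)"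
    by (intro summable_on_comparison_test[OF has_sum_imp_summable]) auto
  with coupling show ?thesis
    by (simp add: finite_cost_couplings_def \<pi>_def)
qed

locale lazy_random_walk =
  fixes V :: "'v set" and d :: "'v \<Rightarrow> 'v \<Rightarrow> real" and \<mu> :: "'v \<Rightarrow> 'v \<Rightarrow> real"
  assumes distance: "is_distance V d"
    and finite_var: "\<And>z. z \<in> V \<Longrightarrow> (\<lambda>v. \<bar>\<mu> z v\<bar>) summable_on V"
    and mass_zero: "\<And>z. z \<in> V \<Longrightarrow> (\<mu> z has_sum 0) V"
    and first_moment: "\<And>z. z \<in> V \<Longrightarrow> (\<lambda>v. d z v * \<bar>\<mu> z v\<bar>) summable_on V"
    and nonneg: "\<And>z \<epsilon> v. z \<in> V \<Longrightarrow> \<epsilon> \<in> {0..1} \<Longrightarrow> v \<in> V \<Longrightarrow> lazy_walk \<mu> \<epsilon> z v \<ge> 0"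
begin

definition dist_drift :: "'v \<Rightarrow> 'v \<Rightarrow> real" where
  "dist_drift z w = (\<Sum>\<^sub>\<infinity>a\<in>V. d a w * \<mu> z a)"

lemma summable_dist_drift:
  assumes z: "z \<in> V" and w: "w \<in> V"
  shows "(\<lambda>a. d a w * \<mu> z a) summable_on V"
proof -
  have "(\<lambda>a. \<bar>d a w * \<mu> z a\<bar>) summable_on V"
  proof (rule summable_on_comparison_test)
    show "(\<lambda>a. d z a * \<bar>\<mu> z a\<bar> + d z w * \<bar>\<mu> z a\<bar>) summable_on V"
      using first_moment[OF z] finite_var[OF z] by (intro summable_on_add summable_on_cmult_right)
    fix a assume a: "a \<in> V"
    have "d a w \<le> d z a + d z w"
      using is_distance_triangle[OF distance a z w] is_distance_sym[OF distance a z] by simp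
    then have "d a w * \<bar>\<mu> z a\<bar> \<le> (d z a + d z w) * \<bar>\<mu> z a\<bar>"
      by (rule mult_right_mono) simp
    moreover have "\<bar>d a w * \<mu> z a\<bar> = d a w * \<bar>\<mu> z a\<bar>"
      using is_distance_nonneg[OF distance a w] by (simp add: abs_mult)
    ultimately show "\<bar>d a w * \<mu> z a\<bar> \<le> d z a * \<bar>\<mu> z a\<bar> + d z w * \<bar>\<mu> z a\<bar>"
      by (simp only: distrib_right)
  qed simp
  then show ?thesis
    unfolding summable_on_iff_abs_summable_on_real[of "\<lambda>a. d a w * \<mu> z a"] by simp
qed

lemma lazy_walk_has_sum: "z \<in> V \<Longrightarrow> (lazy_walk \<mu> \<epsilon> z has_sum 1) V"
  using has_sum_add[OF has_sum_dirac has_sum_cmult_right[OF mass_zero]]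
  by (simp add: lazy_walk_def[abs_def])

lemma lazy_walk_moment:
  assumes "z \<in> V" and "w \<in> V"
  shows "((\<lambda>a. d a w * lazy_walk \<mu> \<epsilon> z a) has_sum d z w + \<epsilon> * dist_drift z w) V"
  using has_sum_add[OF has_sum_mult_dirac[of z V "\<lambda>a. d a w"]
      has_sum_cmult_right[OF has_sum_infsum[OF summable_dist_drift[OF assms]], where c = \<epsilon>]] assms
  by (simp add: lazy_walk_def dist_drift_def algebra_simps)

lemma lazy_walk_couplings_nonempty:
  assumes "\<epsilon> \<in> {0..1}" and "x \<in> V" and "y \<in> V"
  shows "finite_cost_couplings V d (lazy_walk \<mu> \<epsilon> x) (lazy_walk \<mu> \<epsilon> y) \<noteq> {}"
proof -
  have moment: "(\<lambda>a. d a x * lazy_walk \<mu> \<epsilon> z a) summable_on V" if "z \<in> V" for z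
    using lazy_walk_moment[OF that \<open>x \<in> V\<close>] by (rule has_sum_imp_summable)
  have "(\<lambda>(a, b). if a \<in> V \<and> b \<in> V then lazy_walk \<mu> \<epsilon> x a * lazy_walk \<mu> \<epsilon> y b else 0)
          \<in> finite_cost_couplings V d (lazy_walk \<mu> \<epsilon> x) (lazy_walk \<mu> \<epsilon> y)"
    by (rule product_coupling_finite_cost[OF distance \<open>x \<in> V\<close>])
      (use assms lazy_walk_has_sum nonneg moment in auto)
  then show ?thesis
    by blast
qed

lemma W1_lazy_walk_ge:
  assumes "\<epsilon> \<in> {0..1}" and x: "x \<in> V" and y: "y \<in> V"
  shows "d x y + \<epsilon> * (dist_drift x y - dist_drift y y)
           \<le> W1 V d (lazy_walk \<mu> \<epsilon> x) (lazy_walk \<mu> \<epsilon> y)"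
proof -
  have "(d x y + \<epsilon> * dist_drift x y) - (d y y + \<epsilon> * dist_drift y y)
          \<le> W1 V d (lazy_walk \<mu> \<epsilon> x) (lazy_walk \<mu> \<epsilon> y)"
  proof (rule W1_ge_lipschitz_diff[OF distance lazy_walk_couplings_nonempty[OF assms]])
    show "d a y - d b y \<le> d a b" if "a \<in> V" "b \<in> V" for a b
      using is_distance_triangle[OF distance that y] by simp
  qed (use is_distance_nonneg[OF distance _ y] lazy_walk_moment x y in auto)
  then show ?thesis
    using is_distance_eq_0_iff[OF distance y y] by (simp add: algebra_simps)
qed

lemma lazy_walk_mult:
  "lazy_walk \<mu> (t * \<epsilon>) z = (\<lambda>v. (1 - t) * dirac z v + t * lazy_walk \<mu> \<epsilon> z v)"
  by (simp add: lazy_walk_def fun_eq_iff algebra_simps)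

lemma W1_lazy_walk_mult_le:
  assumes "0 \<le> t" "t \<le> 1" and "\<epsilon> \<in> {0..1}" and "x \<in> V" "y \<in> V"
  shows "W1 V d (lazy_walk \<mu> (t * \<epsilon>) x) (lazy_walk \<mu> (t * \<epsilon>) y)
           \<le> (1 - t) * d x y + t * W1 V d (lazy_walk \<mu> \<epsilon> x) (lazy_walk \<mu> \<epsilon> y)"
proof -
  note dirac = dirac_coupling[OF \<open>x \<in> V\<close> \<open>y \<in> V\<close>, of d]
  have "W1 V d (lazy_walk \<mu> (t * \<epsilon>) x) (lazy_walk \<mu> (t * \<epsilon>) y)
          \<le> (1 - t) * W1 V d (dirac x) (dirac y) + t * W1 V d (lazy_walk \<mu> \<epsilon> x) (lazy_walk \<mu> \<epsilon> y)"
    unfolding lazy_walk_mult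
    using dirac(1) lazy_walk_couplings_nonempty assms
    by (intro W1_convex[OF distance]) auto
  also have "W1 V d (dirac x) (dirac y) \<le> d x y"
    using W1_le_transport_cost[OF distance dirac(1)] dirac(2) by simp
  finally show ?thesis
    using assms by (simp add: mult_left_mono)
qed

lemma ORic_eps_le:
  assumes "\<epsilon> \<in> {0..1}" and "x \<in> V" "y \<in> V" "x \<noteq> y"
  shows "ORic_eps V d \<mu> \<epsilon> x y \<le> (dist_drift y y - dist_drift x y) / d x y * \<epsilon>"
proof -
  have "0 < d x y"
    using is_distance_pos[OF distance] assms by blast
  moreover have "d x y * (d x y + \<epsilon> * (dist_drift x y - dist_drift y y))
      \<le> d x y * W1 V d (lazy_walk \<mu> \<epsilon> x) (lazy_walk \<mu> \<epsilon> y)"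
    using W1_lazy_walk_ge[OF assms(1-3)] \<open>0 < d x y\<close> by (intro mult_left_mono) auto
  ultimately show ?thesis
    by (simp add: ORic_eps_def field_simps)
qed

lemma ORic_eps_mult_ge:
  assumes "0 \<le> t" "t \<le> 1" and "\<epsilon> \<in> {0..1}" and "x \<in> V" "y \<in> V" "x \<noteq> y"
  shows "t * ORic_eps V d \<mu> \<epsilon> x y \<le> ORic_eps V d \<mu> (t * \<epsilon>) x y"
proof -
  have "0 < d x y"
    using is_distance_pos[OF distance] assms by blast
  moreover have "d x y * W1 V d (lazy_walk \<mu> (t * \<epsilon>) x) (lazy_walk \<mu> (t * \<epsilon>) y)
      \<le> d x y * ((1 - t) * d x y + t * W1 V d (lazy_walk \<mu> \<epsilon> x) (lazy_walk \<mu> \<epsilon> y))"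
    using W1_lazy_walk_mult_le[OF assms(1-5)] \<open>0 < d x y\<close> by (intro mult_left_mono) auto
  ultimately show ?thesis
    by (simp add: ORic_eps_def field_simps)
qed

end

theorem mainTheorem9:
  fixes V :: "'v set" and E :: "'v \<Rightarrow> 'v \<Rightarrow> bool" and d :: "'v \<Rightarrow> 'v \<Rightarrow> real"
    and \<mu> :: "'v \<Rightarrow> 'v \<Rightarrow> real" and x y :: 'v
  assumes graph: "locally_finite_graph V E"
    and dist: "is_distance V d" and compl: "complete_distance V d"
    and supp: "\<And>z v. z \<in> V \<Longrightarrow> v \<notin> V \<Longrightarrow> \<mu> z v = 0"
    and finite_var: "\<And>z. z \<in> V \<Longrightarrow> (\<lambda>v. \<bar>\<mu> z v\<bar>) summable_on V"
    and mass_zero: "\<And>z. z \<in> V \<Longrightarrow> (\<mu> z has_sum 0) V"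
    and first_moment: "\<And>z. z \<in> V \<Longrightarrow> (\<lambda>v. d z v * \<bar>\<mu> z v\<bar>) summable_on V"
    and prob: "\<And>z \<epsilon> v. z \<in> V \<Longrightarrow> \<epsilon> \<in> {0..1} \<Longrightarrow> v \<in> V \<Longrightarrow> lazy_walk \<mu> \<epsilon> z v \<ge> 0"
    and xy: "x \<in> V" "y \<in> V" "x \<noteq> y"
  shows "\<exists>L::real. ((\<lambda>\<epsilon>. ORic_eps V d \<mu> \<epsilon> x y / \<epsilon>) \<longlongrightarrow> L) (at_right 0)"
proof -
  interpret lazy_random_walk V d \<mu>
    using dist finite_var mass_zero first_moment prob by unfold_locales
  show ?thesis
  proof (rule ex_lim_quotient_at_right_0)
    show "s * ORic_eps V d \<mu> e x y \<le> ORic_eps V d \<mu> (s * e) x y"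
      if "0 < s" "s < 1" "0 < e" "e \<le> 1" for s e
      using ORic_eps_mult_ge[OF _ _ _ xy] that by simp
    show "ORic_eps V d \<mu> e x y \<le> (dist_drift y y - dist_drift x y) / d x y * e"
      if "0 < e" "e \<le> 1" for e
      using ORic_eps_le[OF _ xy] that by simp
  qed
qed

end
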